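(* For each $j$, if $\rho$ is a positive definite operator on $\mathcal H_{\mathcal S}$ then $\mathcal L_j(\rho)$ is positive definite. As a consequence, if for some $1\le j\le M$ the map $\mathcal L_{j,\zeta_j}$ is positivity improving, then so is $\mathcal L_{cy,\boldsymbol\zeta}$.
   Context: Finite-dimensional $\mathcal H_{\mathcal S},\mathcal H_{\mathcal E_j}$ ($j=1..M$), self-adjoint $H_{\mathcal S},H_{\mathcal E_j}$, self-adjoint $V_j$, $\tau_j>0$, $U_j=e^{-i\tau_j(H_{\mathcal S}\otimes\mathrm{Id}+\mathrm{Id}\otimes H_{\mathcal E_j}+V_j)}$; $\beta_{\rm ref}>0$, $\boldsymbol\zeta\in\mathbb R^M$, $\rho_{\mathcal E_j}$ the Gibbs state of $H_{\mathcal E_j}$ at $\beta_{\rm ref}-\zeta_j$; $\mathcal L_j=\mathcal L_{j,\zeta_j}$, $\mathcal L_j(\rho)=\mathrm{Tr}_{\mathcal H_{\mathcal E_j}}(U_j(\rho\otimes\rho_{\mathcal E_j})U_j^* )$; $\mathcal L_{cy,\boldsymbol\zeta}=\mathcal L_M\circ\cdots\circ\mathcal L_1$. Positivity improving: every nonzero positive operator is mapped to a positive definite operator. *)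

theory Defs
  imports Complex_Main "Jordan_Normal_Form.Matrix"
begin

text \<open>The tensor product C^a (x) C^b is C^(a*b) with
  basis index (i,k) |-> i*b + k (system index first).\<close>

definition adj :: "complex mat \<Rightarrow> complex mat" where
  "adj A = mat (dim_col A) (dim_row A) (\<lambda>(i,j). cnj (A $$ (j,i)))"

definition self_adjoint :: "nat \<Rightarrow> complex mat \<Rightarrow> bool" where
  "self_adjoint n A \<longleftrightarrow> A \<in> carrier_mat n n \<and> adj A = A"

definition mtrace :: "complex mat \<Rightarrow> complex" where
  "mtrace A = (\<Sum>i<dim_row A. A $$ (i,i))"

definition qform :: "nat \<Rightarrow> complex mat \<Rightarrow> complex vec \<Rightarrow> complex" where
  "qform n A v = (\<Sum>i<n. \<Sum>k<n. cnj (v $ i) * A $$ (i,k) * v $ k)"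

definition positive_op :: "nat \<Rightarrow> complex mat \<Rightarrow> bool" where
  "positive_op n A \<longleftrightarrow> A \<in> carrier_mat n n \<and>
     (\<forall>v\<in>carrier_vec n. Im (qform n A v) = 0 \<and> Re (qform n A v) \<ge> 0)"

definition positive_definite :: "nat \<Rightarrow> complex mat \<Rightarrow> bool" where
  "positive_definite n A \<longleftrightarrow> A \<in> carrier_mat n n \<and>
     (\<forall>v\<in>carrier_vec n. Im (qform n A v) = 0 \<and>
        (v \<noteq> 0\<^sub>v n \<longrightarrow> Re (qform n A v) > 0))"

definition positivity_improving :: "nat \<Rightarrow> (complex mat \<Rightarrow> complex mat) \<Rightarrow> bool" where
  "positivity_improving n \<Phi> \<longleftrightarrow>
     (\<forall>\<rho>. positive_op n \<rho> \<and> \<rho> \<noteq> 0\<^sub>m n n \<longrightarrow> positive_definite n (\<Phi> \<rho>))"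

definition kron :: "complex mat \<Rightarrow> complex mat \<Rightarrow> complex mat" where
  "kron A B = mat (dim_row A * dim_row B) (dim_col A * dim_col B)
     (\<lambda>(i,j). A $$ (i div dim_row B, j div dim_col B) * B $$ (i mod dim_row B, j mod dim_col B))"

definition ptrace2 :: "nat \<Rightarrow> nat \<Rightarrow> complex mat \<Rightarrow> complex mat" where
  "ptrace2 dS dE X = mat dS dS (\<lambda>(i,j). \<Sum>k<dE. X $$ (i * dE + k, j * dE + k))"

definition mat_exp :: "complex mat \<Rightarrow> complex mat" where
  "mat_exp A = mat (dim_row A) (dim_row A)
     (\<lambda>(i,j). \<Sum>k. (A ^\<^sub>m k) $$ (i,j) / of_nat (fact k))"

definition gibbs :: "real \<Rightarrow> complex mat \<Rightarrow> complex mat" where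
  "gibbs \<beta> H = (1 / mtrace (mat_exp (complex_of_real (- \<beta>) \<cdot>\<^sub>m H)))
                 \<cdot>\<^sub>m mat_exp (complex_of_real (- \<beta>) \<cdot>\<^sub>m H)"

definition unitary_step :: "nat \<Rightarrow> nat \<Rightarrow> complex mat \<Rightarrow> complex mat \<Rightarrow> complex mat \<Rightarrow> real \<Rightarrow> complex mat" where
  "unitary_step dS dE HS HE V \<tau> =
     mat_exp ((- (\<i> * complex_of_real \<tau>)) \<cdot>\<^sub>m (kron HS (1\<^sub>m dE) + kron (1\<^sub>m dS) HE + V))"

definition rep_map :: "nat \<Rightarrow> nat \<Rightarrow> complex mat \<Rightarrow> complex mat \<Rightarrow> complex mat \<Rightarrow> real \<Rightarrow> real
    \<Rightarrow> complex mat \<Rightarrow> complex mat" where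
  "rep_map dS dE HS HE V \<tau> \<beta> \<rho> =
     (let U = unitary_step dS dE HS HE V \<tau>
      in ptrace2 dS dE (U * kron \<rho> (gibbs \<beta> HE) * adj U))"

text \<open>cycle L_M o ... o L_1 (L_1 applied first)\<close>
definition cycle_map :: "nat \<Rightarrow> (nat \<Rightarrow> complex mat \<Rightarrow> complex mat) \<Rightarrow> complex mat \<Rightarrow> complex mat" where
  "cycle_map M L \<rho> = fold L [1..<M+1] \<rho>"

end

theory Submission
  imports Defs
begin

text \<open>Write the Gibbs state as \<open>\<rho>\<^sub>E = E E\<^sup>*\<close> with \<open>E = c e\<^sup>-\<^sup>\<beta>\<^sup>H\<^sup>/\<^sup>2\<close> invertible. Then
  \<open>U (\<rho> \<otimes> \<rho>\<^sub>E) U\<^sup>*\<close> arises from \<open>\<rho> \<otimes> 1\<close> by the invertible congruence with \<open>U (1 \<otimes> E)\<close>, and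
  congruences preserve (semi)definiteness. The partial trace does too, since its quadratic form
  at \<open>v\<close> is the sum of the forms at the vectors \<open>v \<otimes> e\<^sub>k\<close>, at least one of which is nonzero. So
  every \<open>L\<^sub>j\<close> preserves positive definite and positive operators; it also preserves the trace,
  and a positive operator of trace zero vanishes. Hence the steps before a positivity improving
  \<open>L\<^sub>j\<close> keep a nonzero positive state nonzero and positive, \<open>L\<^sub>j\<close> makes it definite, and the
  later steps keep it definite.\<close>

lemma index_mult_mat_sum:
  assumes "A \<in> carrier_mat n m" "B \<in> carrier_mat m p" "i < n" "j < p"
  shows "(A * B) $$ (i,j) = (\<Sum>l<m. A $$ (i,l) * B $$ (l,j))"
  using assms by (auto simp: scalar_prod_def lessThan_atLeast0 intro!: sum.cong)

lemma index_mult_mat_vec_sum: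
  assumes "A \<in> carrier_mat m n" "v \<in> carrier_vec n" "i < m"
  shows "(A *\<^sub>v v) $ i = (\<Sum>l<n. A $$ (i,l) * v $ l)"
  using assms by (auto simp: scalar_prod_def lessThan_atLeast0 intro!: sum.cong)

lemma pow_mat_add:
  fixes A :: "'a :: semiring_1 mat"
  assumes A: "A \<in> carrier_mat n n"
  shows "A ^\<^sub>m p * A ^\<^sub>m q = A ^\<^sub>m (p + q)"
proof (induction q)
  case (Suc q)
  have "A ^\<^sub>m p * A ^\<^sub>m Suc q = (A ^\<^sub>m p * A ^\<^sub>m q) * A"
    using A by (simp add: assoc_mult_mat[of _ n n _ n])
  then show ?case using Suc by simp
qed (use A in simp)

lemma pow_mat_smult:
  fixes A :: "'a :: comm_semiring_1 mat"
  assumes A: "A \<in> carrier_mat n n"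
  shows "(a \<cdot>\<^sub>m A) ^\<^sub>m k = a ^ k \<cdot>\<^sub>m A ^\<^sub>m k"
proof (induction k)
  case (Suc k)
  have "(a \<cdot>\<^sub>m A) ^\<^sub>m Suc k = (a ^ k \<cdot>\<^sub>m A ^\<^sub>m k) * (a \<cdot>\<^sub>m A)" using Suc by simp
  also have "\<dots> = a \<cdot>\<^sub>m (a ^ k \<cdot>\<^sub>m A ^\<^sub>m Suc k)"
    using A by (simp add: mult_smult_assoc_mat[of _ n n _ n] mult_smult_distrib[of _ n n _ n])
  finally show ?case by (auto intro!: eq_matI simp: mult.assoc)
qed (use A in \<open>auto intro!: eq_matI\<close>)

lemma norm_pow_mat_entry_le:
  fixes A :: "complex mat"
  assumes A: "A \<in> carrier_mat n n" and "i < n" "j < n"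
  shows "norm ((A ^\<^sub>m k) $$ (i,j)) \<le> (\<Sum>i<n. \<Sum>j<n. norm (A $$ (i,j))) ^ k"
  using assms(2,3)
proof (induction k arbitrary: j)
  case (Suc k)
  let ?C = "\<Sum>i<n. \<Sum>j<n. norm (A $$ (i,j))"
  have "(A ^\<^sub>m Suc k) $$ (i,j) = (\<Sum>l<n. (A ^\<^sub>m k) $$ (i,l) * A $$ (l,j))"
    using index_mult_mat_sum[of "A ^\<^sub>m k" n n A n i j] Suc.prems A by simp
  then have "norm ((A ^\<^sub>m Suc k) $$ (i,j)) \<le> (\<Sum>l<n. norm ((A ^\<^sub>m k) $$ (i,l)) * norm (A $$ (l,j)))"
    using norm_sum[of "\<lambda>l. (A ^\<^sub>m k) $$ (i,l) * A $$ (l,j)" "{..<n}"] by (simp add: norm_mult)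
  also have "\<dots> \<le> (\<Sum>l<n. ?C ^ k * norm (A $$ (l,j)))"
    by (intro sum_mono mult_right_mono Suc.IH) (use Suc.prems in auto)
  also have "\<dots> \<le> ?C ^ k * ?C"
    unfolding sum_distrib_left[symmetric]
    by (intro mult_left_mono sum_mono member_le_sum zero_le_power sum_nonneg) (use Suc.prems in auto)
  finally show ?case by (simp only: power_Suc2)
qed (use A in auto)

lemma adj_carrier [simp]: "A \<in> carrier_mat n m \<Longrightarrow> adj A \<in> carrier_mat m n"
  by (simp add: adj_def)

lemma dim_adj [simp]: "dim_row (adj A) = dim_col A" "dim_col (adj A) = dim_row A"
  by (simp_all add: adj_def)

lemma index_adj [simp]: "i < dim_col A \<Longrightarrow> j < dim_row A \<Longrightarrow> adj A $$ (i,j) = cnj (A $$ (j,i))"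
  by (simp add: adj_def)

lemma adj_one [simp]: "adj (1\<^sub>m n) = 1\<^sub>m n"
  by (intro eq_matI) (auto simp: adj_def)

lemma adj_smult: "adj (c \<cdot>\<^sub>m A) = cnj c \<cdot>\<^sub>m adj A"
  by (intro eq_matI) (auto simp: adj_def)

lemma adj_add: "A \<in> carrier_mat n m \<Longrightarrow> B \<in> carrier_mat n m \<Longrightarrow> adj (A + B) = adj A + adj B"
  by (intro eq_matI) auto

lemma adj_mult:
  assumes "A \<in> carrier_mat n m" "B \<in> carrier_mat m p"
  shows "adj (A * B) = adj B * adj A"
proof (rule eq_matI)
  fix i j assume "i < dim_row (adj B * adj A)" "j < dim_col (adj B * adj A)"
  then have ij: "i < p" "j < n" using assms by auto
  have "adj (A * B) $$ (i,j) = cnj (\<Sum>l<m. A $$ (j,l) * B $$ (l,i))"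
    using assms ij index_mult_mat_sum[OF assms, of j i] by simp
  also have "\<dots> = (adj B * adj A) $$ (i,j)"
    using assms ij index_mult_mat_sum[of "adj B" p m "adj A" n i j] by (simp add: mult.commute)
  finally show "adj (A * B) $$ (i,j) = (adj B * adj A) $$ (i,j)" .
qed (use assms in auto)

lemma adj_pow_mat:
  assumes A: "A \<in> carrier_mat n n" and h: "adj A = A"
  shows "adj (A ^\<^sub>m k) = A ^\<^sub>m k"
proof (induction k)
  case (Suc k)
  have "adj (A ^\<^sub>m Suc k) = A * A ^\<^sub>m k"
    using Suc h A by (simp add: adj_mult[of _ n n _ n])
  also have "\<dots> = A ^\<^sub>m Suc k"
    using pow_mat_add[OF A, of 1 k] pow_mat_add[OF A, of k 1] A by simp
  finally show ?case .
qed (use A in simp)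

section \<open>Matrix exponential\<close>

definition exp_term :: "complex mat \<Rightarrow> nat \<Rightarrow> nat \<Rightarrow> complex \<Rightarrow> nat \<Rightarrow> complex" where
  "exp_term A i j z k = (A ^\<^sub>m k) $$ (i,j) * (z ^ k / fact k)"

lemma mat_exp_smult_entry:
  assumes A: "A \<in> carrier_mat n n" and "i < n" "j < n"
  shows "mat_exp (z \<cdot>\<^sub>m A) $$ (i,j) = (\<Sum>k. exp_term A i j z k)"
  using assms by (simp add: mat_exp_def pow_mat_smult[OF A] exp_term_def mult.commute)

lemma dim_mat_exp [simp]: "dim_row (mat_exp A) = dim_row A" "dim_col (mat_exp A) = dim_row A"
  by (simp_all add: mat_exp_def)

lemma mat_exp_carrier [simp]: "A \<in> carrier_mat n n \<Longrightarrow> mat_exp A \<in> carrier_mat n n"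
  by (simp add: mat_exp_def)

lemma summable_norm_exp_term:
  assumes A: "A \<in> carrier_mat n n" and "i < n" "j < n"
  shows "summable (\<lambda>k. norm (exp_term A i j z k))"
proof (rule summable_comparison_test)
  let ?C = "\<Sum>i<n. \<Sum>j<n. norm (A $$ (i,j))"
  show "\<exists>N. \<forall>k\<ge>N. norm (norm (exp_term A i j z k)) \<le> (?C * norm z) ^ k /\<^sub>R fact k"
    using norm_pow_mat_entry_le[OF assms]
    by (auto simp: exp_term_def norm_mult norm_divide norm_power power_mult_distrib divide_simps
        intro!: mult_right_mono)
qed (rule summable_exp_generic)

lemma exp_term_Cauchy_product:
  assumes A: "A \<in> carrier_mat n n" and ij: "i < n" "j < n"
  shows "(\<Sum>l<n. \<Sum>p\<le>k. exp_term A i l a p * exp_term A l j b (k - p)) = exp_term A i j (a + b) k"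
proof -
  let ?S = "\<lambda>x p. x ^ p / fact p"
  have "(\<Sum>l<n. \<Sum>p\<le>k. exp_term A i l a p * exp_term A l j b (k - p))
      = (\<Sum>p\<le>k. (\<Sum>l<n. (A ^\<^sub>m p) $$ (i,l) * (A ^\<^sub>m (k - p)) $$ (l,j)) * (?S a p * ?S b (k - p)))"
    unfolding exp_term_def
    by (subst sum.swap) (auto simp: sum_distrib_left sum_distrib_right sum_divide_distrib mult_ac intro!: sum.cong)
  also have "\<dots> = (\<Sum>p\<le>k. (A ^\<^sub>m k) $$ (i,j) * (?S a p * ?S b (k - p)))"
    using pow_mat_add[OF A] A ij by (intro sum.cong refl) (simp add: index_mult_mat_sum[symmetric, of _ n n _ n])
  also have "\<dots> = (A ^\<^sub>m k) $$ (i,j) * ?S (a + b) k"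
    using exp_series_add_commuting[of a b k]
    by (simp add: sum_distrib_left scaleR_conv_of_real divide_inverse mult_ac)
  finally show ?thesis
    by (simp add: exp_term_def)
qed

lemma mat_exp_smult_add:
  assumes A: "A \<in> carrier_mat n n"
  shows "mat_exp (a \<cdot>\<^sub>m A) * mat_exp (b \<cdot>\<^sub>m A) = mat_exp ((a + b) \<cdot>\<^sub>m A)"
proof (rule eq_matI)
  fix i j assume "i < dim_row (mat_exp ((a + b) \<cdot>\<^sub>m A))" "j < dim_col (mat_exp ((a + b) \<cdot>\<^sub>m A))"
  then have ij: "i < n" "j < n" using A by (auto simp: mat_exp_def)
  have "(mat_exp (a \<cdot>\<^sub>m A) * mat_exp (b \<cdot>\<^sub>m A)) $$ (i,j)
     = (\<Sum>l<n. (\<Sum>k. exp_term A i l a k) * (\<Sum>k. exp_term A l j b k))"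
    using A ij index_mult_mat_sum[of "mat_exp (a \<cdot>\<^sub>m A)" n n "mat_exp (b \<cdot>\<^sub>m A)" n i j]
    by (simp add: mat_exp_smult_entry)
  also have "\<dots> = (\<Sum>l<n. \<Sum>k. \<Sum>p\<le>k. exp_term A i l a p * exp_term A l j b (k - p))"
    by (intro sum.cong refl Cauchy_product summable_norm_exp_term[OF A]) (use ij in auto)
  also have "\<dots> = (\<Sum>k. \<Sum>l<n. \<Sum>p\<le>k. exp_term A i l a p * exp_term A l j b (k - p))"
    by (intro suminf_sum[symmetric] summable_Cauchy_product summable_norm_exp_term[OF A])
      (use ij in auto)
  also have "\<dots> = mat_exp ((a + b) \<cdot>\<^sub>m A) $$ (i,j)"
    using A ij by (simp add: exp_term_Cauchy_product mat_exp_smult_entry)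
  finally show "(mat_exp (a \<cdot>\<^sub>m A) * mat_exp (b \<cdot>\<^sub>m A)) $$ (i,j) = mat_exp ((a + b) \<cdot>\<^sub>m A) $$ (i,j)" .
qed (use A in \<open>auto simp: mat_exp_def\<close>)

lemma mat_exp_zero_smult:
  assumes A: "A \<in> carrier_mat n n"
  shows "mat_exp (0 \<cdot>\<^sub>m A) = 1\<^sub>m n"
proof (rule eq_matI)
  fix i j assume "i < dim_row (1\<^sub>m n)" "j < dim_col (1\<^sub>m n)"
  then have ij: "i < n" "j < n" by auto
  have "(\<Sum>k. exp_term A i j 0 k) = (\<Sum>k\<in>{0}. exp_term A i j 0 k)"
    by (rule suminf_finite) (auto simp: exp_term_def)
  then show "mat_exp (0 \<cdot>\<^sub>m A) $$ (i,j) = 1\<^sub>m n $$ (i,j)"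
    using A ij by (simp add: mat_exp_smult_entry exp_term_def)
qed (use A in \<open>auto simp: mat_exp_def\<close>)

lemma adj_mat_exp_smult:
  assumes A: "A \<in> carrier_mat n n" and h: "adj A = A"
  shows "adj (mat_exp (a \<cdot>\<^sub>m A)) = mat_exp (cnj a \<cdot>\<^sub>m A)"
proof (rule eq_matI)
  fix i j assume "i < dim_row (mat_exp (cnj a \<cdot>\<^sub>m A))" "j < dim_col (mat_exp (cnj a \<cdot>\<^sub>m A))"
  then have ij: "i < n" "j < n" using A by (auto simp: mat_exp_def)
  have herm: "cnj ((A ^\<^sub>m k) $$ (j,i)) = (A ^\<^sub>m k) $$ (i,j)" for k
    using arg_cong[OF adj_pow_mat[OF A h, of k], of "\<lambda>B. B $$ (i,j)"] A ij by simp
  have "adj (mat_exp (a \<cdot>\<^sub>m A)) $$ (i,j) = cnj (\<Sum>k. exp_term A j i a k)"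
    using A ij mat_exp_smult_entry[OF A, of j i a] by simp
  also have "\<dots> = (\<Sum>k. cnj (exp_term A j i a k))"
    using summable_norm_cancel[OF summable_norm_exp_term[OF A ij(2,1)]]
    by (metis sums_cnj summable_sums sums_unique)
  also have "\<dots> = mat_exp (cnj a \<cdot>\<^sub>m A) $$ (i,j)"
    using A ij by (simp add: mat_exp_smult_entry exp_term_def herm)
  finally show "adj (mat_exp (a \<cdot>\<^sub>m A)) $$ (i,j) = mat_exp (cnj a \<cdot>\<^sub>m A) $$ (i,j)" .
qed (use A in \<open>auto simp: mat_exp_def\<close>)

lemma mat_exp_smult_unitary:
  assumes A: "A \<in> carrier_mat n n" and h: "adj A = A" and c: "cnj c = - c"
  shows "mat_exp (c \<cdot>\<^sub>m A) * adj (mat_exp (c \<cdot>\<^sub>m A)) = 1\<^sub>m n"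
    and "adj (mat_exp (c \<cdot>\<^sub>m A)) * mat_exp (c \<cdot>\<^sub>m A) = 1\<^sub>m n"
  using mat_exp_smult_add[OF A, of c "cnj c"] mat_exp_smult_add[OF A, of "cnj c" c]
    mat_exp_zero_smult[OF A] adj_mat_exp_smult[OF A h] c by simp_all

section \<open>Kronecker products and partial traces\<close>

lemma sum_lessThan_mult: "(\<Sum>x<a * b. f x) = (\<Sum>i<a. \<Sum>k<b. f (i * b + k))" for a b :: nat
proof -
  have "(\<Sum>k<b. f (i * b + k)) = sum f {i * b..<i * b + b}" for i
    by (subst sum.atLeastLessThan_shift_0) (simp add: lessThan_atLeast0 add.commute)
  then show ?thesis by (simp add: sum.nat_group)
qed

lemma mult_add_less_mult: "i < a \<Longrightarrow> k < b \<Longrightarrow> i * b + k < a * b" for a b i k :: nat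
  by (rule less_le_trans[of _ "Suc i * b"]) (simp, simp add: mult_le_mono1 del: mult_Suc)

lemma div_mod_less_mult: "x < a * b \<Longrightarrow> x div b < a \<and> x mod b < b" for a b x :: nat
  by (cases "b = 0") (simp_all add: less_mult_imp_div_less)

lemma dim_kron [simp]:
  "dim_row (kron A B) = dim_row A * dim_row B" "dim_col (kron A B) = dim_col A * dim_col B"
  by (simp_all add: kron_def)

lemma kron_carrier [simp]:
  "A \<in> carrier_mat a1 a2 \<Longrightarrow> B \<in> carrier_mat b1 b2 \<Longrightarrow> kron A B \<in> carrier_mat (a1 * b1) (a2 * b2)"
  by (simp add: kron_def)

lemma index_kron:
  assumes "A \<in> carrier_mat a1 a2" "B \<in> carrier_mat b1 b2" "i < a1" "k < b1" "j < a2" "l < b2"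
  shows "kron A B $$ (i * b1 + k, j * b2 + l) = A $$ (i,j) * B $$ (k,l)"
  using assms mult_add_less_mult[of i a1 k b1] mult_add_less_mult[of j a2 l b2] by (simp add: kron_def)

lemma kron_mult:
  assumes A: "A \<in> carrier_mat a1 a2" and B: "B \<in> carrier_mat b1 b2"
    and C: "C \<in> carrier_mat a2 a3" and D: "D \<in> carrier_mat b2 b3"
  shows "kron A B * kron C D = kron (A * C) (B * D)"
proof (rule eq_matI)
  fix x y assume "x < dim_row (kron (A * C) (B * D))" "y < dim_col (kron (A * C) (B * D))"
  then have "x < a1 * b1" "y < a3 * b3" using A B C D by auto
  then obtain i k j l where ik: "i < a1" "k < b1" "j < a3" "l < b3"
    and xy: "x = i * b1 + k" "y = j * b3 + l"
    using div_mod_less_mult by (metis div_mult_mod_eq)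
  have "(kron A B * kron C D) $$ (x,y)
      = (\<Sum>p<a2. \<Sum>q<b2. kron A B $$ (x, p * b2 + q) * kron C D $$ (p * b2 + q, y))"
    using A B C D \<open>x < a1 * b1\<close> \<open>y < a3 * b3\<close>
      index_mult_mat_sum[of "kron A B" "a1 * b1" "a2 * b2" "kron C D" "a3 * b3" x y]
    by (simp add: sum_lessThan_mult)
  also have "\<dots> = (\<Sum>p<a2. \<Sum>q<b2. (A $$ (i,p) * C $$ (p,j)) * (B $$ (k,q) * D $$ (q,l)))"
    using ik unfolding xy
    by (intro sum.cong refl)
      (simp only: index_kron[OF A B] index_kron[OF C D] lessThan_iff, simp only: mult_ac)
  also have "\<dots> = kron (A * C) (B * D) $$ (x,y)"
    using A B C D ik index_mult_mat_sum[OF A C, of i j] index_mult_mat_sum[OF B D, of k l]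
    unfolding xy by (simp add: index_kron[of "A * C" a1 a3 "B * D" b1 b3] sum_product)
  finally show "(kron A B * kron C D) $$ (x,y) = kron (A * C) (B * D) $$ (x,y)" .
qed (use A B C D in auto)

lemma adj_kron: "adj (kron A B) = kron (adj A) (adj B)"
  by (intro eq_matI) (auto simp: adj_def kron_def div_mod_less_mult)

lemma kron_one: "kron (1\<^sub>m a) (1\<^sub>m b) = 1\<^sub>m (a * b)"
proof (rule eq_matI)
  fix x y assume "x < dim_row (1\<^sub>m (a * b))" "y < dim_col (1\<^sub>m (a * b))"
  then have "x < a * b" "y < a * b" by auto
  moreover have "x div b = y div b \<and> x mod b = y mod b \<longleftrightarrow> x = y"
    by (metis div_mult_mod_eq)
  ultimately show "kron (1\<^sub>m a) (1\<^sub>m b) $$ (x,y) = 1\<^sub>m (a * b) $$ (x,y)"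
    by (auto simp: kron_def div_mod_less_mult)
qed auto

lemma mtrace_kron:
  assumes A: "A \<in> carrier_mat n n" and B: "B \<in> carrier_mat b b"
  shows "mtrace (kron A B) = mtrace A * mtrace B"
  using assms by (simp add: mtrace_def sum_lessThan_mult index_kron sum_product)

lemma ptrace2_carrier [simp]: "ptrace2 n b Y \<in> carrier_mat n n"
  by (simp add: ptrace2_def)

lemma mtrace_ptrace2: "Y \<in> carrier_mat (n * b) (n * b) \<Longrightarrow> mtrace (ptrace2 n b Y) = mtrace Y"
  by (simp add: mtrace_def ptrace2_def sum_lessThan_mult)

lemma mtrace_mult_comm:
  assumes A: "A \<in> carrier_mat n m" and B: "B \<in> carrier_mat m n"
  shows "mtrace (A * B) = mtrace (B * A)"
proof -
  have "mtrace (A * B) = (\<Sum>i<n. \<Sum>l<m. A $$ (i,l) * B $$ (l,i))"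
    using assms index_mult_mat_sum[OF A B] by (simp add: mtrace_def)
  also have "\<dots> = (\<Sum>l<m. \<Sum>i<n. B $$ (l,i) * A $$ (i,l))"
    by (subst sum.swap) (simp add: mult.commute)
  also have "\<dots> = mtrace (B * A)"
    using assms index_mult_mat_sum[OF B A] by (simp add: mtrace_def)
  finally show ?thesis .
qed

lemma mtrace_smult: "A \<in> carrier_mat n n \<Longrightarrow> mtrace (c \<cdot>\<^sub>m A) = c * mtrace A"
  by (simp add: mtrace_def sum_distrib_left)

lemma mtrace_mult_adj:
  assumes "E \<in> carrier_mat n m"
  shows "mtrace (E * adj E) = of_real (\<Sum>i<n. \<Sum>j<m. (cmod (E $$ (i,j)))\<^sup>2)"
proof -
  have "z * cnj z = of_real ((cmod z)\<^sup>2)" for z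
    by (rule complex_norm_square[symmetric])
  then show ?thesis
    using assms index_mult_mat_sum[of E n m "adj E" n] by (simp add: mtrace_def of_real_sum)
qed

section \<open>Positivity\<close>

lemma qform_congruence:
  assumes B: "B \<in> carrier_mat n m" and Y: "Y \<in> carrier_mat m m" and v: "v \<in> carrier_vec n"
  shows "qform n (B * Y * adj B) v = qform m Y (adj B *\<^sub>v v)"
proof -
  have entry: "(B * Y * adj B) $$ (i,k) = (\<Sum>p<m. \<Sum>q<m. B $$ (i,p) * Y $$ (p,q) * cnj (B $$ (k,q)))"
    if "i < n" "k < n" for i k
  proof -
    have "(B * Y * adj B) $$ (i,k) = (\<Sum>q<m. (\<Sum>p<m. B $$ (i,p) * Y $$ (p,q)) * cnj (B $$ (k,q)))"
      using index_mult_mat_sum[of "B * Y" n m "adj B" n i k] index_mult_mat_sum[OF B Y, of i] B Y that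
      by simp
    then show ?thesis by (subst sum.swap) (simp add: sum_distrib_right)
  qed
  have "qform n (B * Y * adj B) v = (\<Sum>i<n. \<Sum>k<n. \<Sum>p<m. \<Sum>q<m.
      (cnj (v $ i) * B $$ (i,p)) * Y $$ (p,q) * (cnj (B $$ (k,q)) * v $ k))"
    unfolding qform_def
    by (intro sum.cong refl) (simp add: entry sum_distrib_left sum_distrib_right mult_ac)
  also have "\<dots> = (\<Sum>p<m. \<Sum>q<m. \<Sum>i<n. \<Sum>k<n.
      (cnj (v $ i) * B $$ (i,p)) * Y $$ (p,q) * (cnj (B $$ (k,q)) * v $ k))"
    by (simp add: sum.swap[of _ "{..<n}" "{..<m}"])
  also have "\<dots> = qform m Y (adj B *\<^sub>v v)"
  proof -
    have "(adj B *\<^sub>v v) $ p = (\<Sum>i<n. cnj (B $$ (i,p)) * v $ i)" if "p < m" for p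
      using index_mult_mat_vec_sum[of "adj B" m n v p] B v that by simp
    then show ?thesis
      unfolding qform_def by (intro sum.cong refl) (simp add: sum_distrib_left sum_distrib_right mult_ac)
  qed
  finally show ?thesis .
qed

definition slice_vec :: "nat \<Rightarrow> nat \<Rightarrow> nat \<Rightarrow> complex vec \<Rightarrow> complex vec" where
  "slice_vec n b k w = vec n (\<lambda>i. w $ (i * b + k))"

definition kron_unit_vec :: "nat \<Rightarrow> nat \<Rightarrow> nat \<Rightarrow> complex vec \<Rightarrow> complex vec" where
  "kron_unit_vec n b k v = vec (n * b) (\<lambda>x. if x mod b = k then v $ (x div b) else 0)"

lemma slice_vec_carrier [simp]: "slice_vec n b k w \<in> carrier_vec n"
  by (simp add: slice_vec_def)

lemma kron_unit_vec_carrier [simp]: "kron_unit_vec n b k v \<in> carrier_vec (n * b)"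
  by (simp add: kron_unit_vec_def)

lemma qform_kron_one:
  assumes R: "R \<in> carrier_mat n n"
  shows "qform (n * b) (kron R (1\<^sub>m b)) w = (\<Sum>k<b. qform n R (slice_vec n b k w))"
proof -
  have "qform (n * b) (kron R (1\<^sub>m b)) w = (\<Sum>i<n. \<Sum>k<b. \<Sum>j<n. \<Sum>l<b.
      if l = k then cnj (w $ (i * b + k)) * R $$ (i,j) * w $ (j * b + k) else 0)"
    unfolding qform_def sum_lessThan_mult using R by (intro sum.cong refl) (simp add: index_kron)
  also have "\<dots> = (\<Sum>k<b. \<Sum>i<n. \<Sum>j<n. cnj (w $ (i * b + k)) * R $$ (i,j) * w $ (j * b + k))"
    by (simp add: sum.delta sum.swap[of _ "{..<n}" "{..<b}"])
  also have "\<dots> = (\<Sum>k<b. qform n R (slice_vec n b k w))"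
    by (simp add: qform_def slice_vec_def)
  finally show ?thesis .
qed

lemma qform_support:
  assumes g: "inj_on g I" "g ` I \<subseteq> {..<n}"
    and zero: "\<And>x. x < n \<Longrightarrow> x \<notin> g ` I \<Longrightarrow> v $ x = 0"
  shows "qform n A v = (\<Sum>i\<in>I. \<Sum>j\<in>I. cnj (v $ g i) * A $$ (g i, g j) * v $ g j)"
proof -
  have "qform n A v = (\<Sum>x\<in>g ` I. \<Sum>y\<in>g ` I. cnj (v $ x) * A $$ (x,y) * v $ y)"
    unfolding qform_def using g zero
    by (intro sum.mono_neutral_cong_right) (auto intro!: sum.mono_neutral_cong_right finite_subset)
  also have "\<dots> = (\<Sum>i\<in>I. \<Sum>j\<in>I. cnj (v $ g i) * A $$ (g i, g j) * v $ g j)"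
    using g(1) by (simp add: sum.reindex)
  finally show ?thesis .
qed

lemma qform_ptrace2:
  assumes Y: "Y \<in> carrier_mat (n * b) (n * b)"
  shows "qform n (ptrace2 n b Y) v = (\<Sum>k<b. qform (n * b) Y (kron_unit_vec n b k v))"
proof -
  have "qform (n * b) Y (kron_unit_vec n b k v)
      = (\<Sum>i<n. \<Sum>j<n. cnj (v $ i) * Y $$ (i * b + k, j * b + k) * v $ j)" if k: "k < b" for k
  proof -
    have "inj_on (\<lambda>i. i * b + k) {..<n}" using k by (auto simp: inj_on_def)
    moreover have "(\<lambda>i. i * b + k) ` {..<n} \<subseteq> {..<n * b}" using k mult_add_less_mult by auto
    moreover have "kron_unit_vec n b k v $ x = 0" if "x < n * b" "x \<notin> (\<lambda>i. i * b + k) ` {..<n}" for x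
      using that div_mod_less_mult[of x n b] div_mult_mod_eq[of x b]
      by (force simp: kron_unit_vec_def)
    ultimately show ?thesis
      using k by (simp add: qform_support kron_unit_vec_def mult_add_less_mult)
  qed
  then have "(\<Sum>k<b. qform (n * b) Y (kron_unit_vec n b k v))
      = (\<Sum>k<b. \<Sum>i<n. \<Sum>j<n. cnj (v $ i) * Y $$ (i * b + k, j * b + k) * v $ j)"
    by simp
  also have "\<dots> = (\<Sum>i<n. \<Sum>j<n. \<Sum>k<b. cnj (v $ i) * Y $$ (i * b + k, j * b + k) * v $ j)"
    by (subst sum.swap) (simp add: sum.swap[of _ "{..<b}" "{..<n}"])
  also have "\<dots> = qform n (ptrace2 n b Y) v"
    by (simp add: qform_def ptrace2_def sum_distrib_left sum_distrib_right)
  finally show ?thesis by simp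
qed

lemma qform_zero_vec [simp]: "qform n A (0\<^sub>v n) = 0"
  by (simp add: qform_def)

lemma positive_definite_imp_positive_op: "positive_definite n A \<Longrightarrow> positive_op n A"
  unfolding positive_op_def positive_definite_def
  by (metis less_imp_le order.refl qform_zero_vec zero_complex.sel(1,2))

lemma positive_op_qform_sum:
  assumes "A \<in> carrier_mat n n" and "positive_op m B"
    and "\<And>k v. v \<in> carrier_vec n \<Longrightarrow> f k v \<in> carrier_vec m"
    and "\<And>v. v \<in> carrier_vec n \<Longrightarrow> qform n A v = (\<Sum>k\<in>K. qform m B (f k v))"
  shows "positive_op n A"
  using assms by (auto simp: positive_op_def Im_sum Re_sum intro!: sum_nonneg)

lemma positive_definite_qform_sum:
  assumes A: "A \<in> carrier_mat n n" and B: "positive_definite m B" and K: "finite K"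
    and f: "\<And>k v. v \<in> carrier_vec n \<Longrightarrow> f k v \<in> carrier_vec m"
    and q: "\<And>v. v \<in> carrier_vec n \<Longrightarrow> qform n A v = (\<Sum>k\<in>K. qform m B (f k v))"
    and nonzero: "\<And>v. v \<in> carrier_vec n \<Longrightarrow> v \<noteq> 0\<^sub>v n \<Longrightarrow> \<exists>k\<in>K. f k v \<noteq> 0\<^sub>v m"
  shows "positive_definite n A"
proof -
  have B': "positive_op m B" using B by (rule positive_definite_imp_positive_op)
  have "Re (qform n A v) > 0" if v: "v \<in> carrier_vec n" "v \<noteq> 0\<^sub>v n" for v
  proof -
    obtain k where k: "k \<in> K" "f k v \<noteq> 0\<^sub>v m" using nonzero[OF v] by blast
    have "0 < Re (qform m B (f k v))" using B k f v by (simp add: positive_definite_def)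
    also have "\<dots> \<le> (\<Sum>k\<in>K. Re (qform m B (f k v)))"
      by (rule member_le_sum) (use k K B' f v in \<open>auto simp: positive_op_def\<close>)
    finally show ?thesis using q[OF v(1)] by (simp add: Re_sum)
  qed
  then show ?thesis
    using positive_op_qform_sum[OF A B' f q]
    by (auto simp: positive_op_def positive_definite_def)
qed

lemma positive_op_congruence:
  assumes Y: "positive_op m Y" and B: "B \<in> carrier_mat n m"
  shows "positive_op n (B * Y * adj B)"
proof -
  have "Y \<in> carrier_mat m m" using Y by (simp add: positive_op_def)
  with B show ?thesis
    by (intro positive_op_qform_sum[OF _ Y, where K = "{()}" and f = "\<lambda>_ v. adj B *\<^sub>v v"])
      (auto simp: qform_congruence intro!: mult_carrier_mat mult_mat_vec_carrier)
qed

lemma positive_definite_congruence: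
  assumes Y: "positive_definite m Y" and B: "B \<in> carrier_mat n m"
    and C: "C \<in> carrier_mat n m" and inv: "C * adj B = 1\<^sub>m n"
  shows "positive_definite n (B * Y * adj B)"
proof (rule positive_definite_qform_sum[OF _ Y, where K = "{()}" and f = "\<lambda>_ v. adj B *\<^sub>v v"])
  have "Y \<in> carrier_mat m m" using Y by (simp add: positive_definite_def)
  with B show "B * Y * adj B \<in> carrier_mat n n"
    and "\<And>v. v \<in> carrier_vec n \<Longrightarrow> qform n (B * Y * adj B) v = (\<Sum>k\<in>{()}. qform m Y (adj B *\<^sub>v v))"
    by (auto simp: qform_congruence intro!: mult_carrier_mat)
  fix v :: "complex vec" assume v: "v \<in> carrier_vec n" "v \<noteq> 0\<^sub>v n"
  have "v = C *\<^sub>v (adj B *\<^sub>v v)"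
    using B C v inv by (simp flip: assoc_mult_mat_vec[of C n m "adj B" n v])
  then show "\<exists>k\<in>{()}. adj B *\<^sub>v v \<noteq> 0\<^sub>v m"
    using C v by auto
qed (use B in \<open>auto intro!: mult_mat_vec_carrier\<close>)

lemma positive_op_kron_one:
  assumes R: "positive_op n R"
  shows "positive_op (n * b) (kron R (1\<^sub>m b))"
proof -
  have "R \<in> carrier_mat n n" using R by (simp add: positive_op_def)
  then show ?thesis
    by (intro positive_op_qform_sum[OF _ R, where K = "{..<b}" and f = "slice_vec n b"])
      (simp_all add: qform_kron_one)
qed

lemma positive_definite_kron_one:
  assumes R: "positive_definite n R"
  shows "positive_definite (n * b) (kron R (1\<^sub>m b))"
proof (rule positive_definite_qform_sum[OF _ R, where K = "{..<b}" and f = "slice_vec n b"])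
  have "R \<in> carrier_mat n n" using R by (simp add: positive_definite_def)
  then show "kron R (1\<^sub>m b) \<in> carrier_mat (n * b) (n * b)"
    and "\<And>w. qform (n * b) (kron R (1\<^sub>m b)) w = (\<Sum>k\<in>{..<b}. qform n R (slice_vec n b k w))"
    by (simp_all add: qform_kron_one)
  fix w :: "complex vec" assume w: "w \<in> carrier_vec (n * b)" "w \<noteq> 0\<^sub>v (n * b)"
  then obtain x where x: "x < n * b" "w $ x \<noteq> 0" by (metis eq_vecI carrier_vecD index_zero_vec)
  then have "slice_vec n b (x mod b) w $ (x div b) \<noteq> 0"
    by (simp add: slice_vec_def div_mod_less_mult)
  then show "\<exists>k\<in>{..<b}. slice_vec n b k w \<noteq> 0\<^sub>v n"
    using x div_mod_less_mult by (metis index_zero_vec(1) lessThan_iff)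
qed auto

lemma positive_op_ptrace2:
  assumes Y: "positive_op (n * b) Y"
  shows "positive_op n (ptrace2 n b Y)"
proof -
  have "Y \<in> carrier_mat (n * b) (n * b)" using Y by (simp add: positive_op_def)
  then show ?thesis
    by (intro positive_op_qform_sum[OF _ Y, where K = "{..<b}" and f = "kron_unit_vec n b"])
      (simp_all add: qform_ptrace2)
qed

lemma positive_definite_ptrace2:
  assumes Y: "positive_definite (n * b) Y" and b: "b > 0"
  shows "positive_definite n (ptrace2 n b Y)"
proof (rule positive_definite_qform_sum[OF _ Y, where K = "{..<b}" and f = "kron_unit_vec n b"])
  have "Y \<in> carrier_mat (n * b) (n * b)" using Y by (simp add: positive_definite_def)
  then show "\<And>v. qform n (ptrace2 n b Y) v = (\<Sum>k\<in>{..<b}. qform (n * b) Y (kron_unit_vec n b k v))"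
    by (simp add: qform_ptrace2)
  fix v :: "complex vec" assume v: "v \<in> carrier_vec n" "v \<noteq> 0\<^sub>v n"
  then obtain i where i: "i < n" "v $ i \<noteq> 0" by (metis eq_vecI carrier_vecD index_zero_vec)
  moreover have "i * b < n * b" using b i mult_add_less_mult[of i n 0 b] by simp
  ultimately have "kron_unit_vec n b 0 v $ (i * b) \<noteq> 0"
    using b by (simp add: kron_unit_vec_def)
  then show "\<exists>k\<in>{..<b}. kron_unit_vec n b k v \<noteq> 0\<^sub>v (n * b)"
    using b \<open>i * b < n * b\<close> by (metis index_zero_vec(1) lessThan_iff)
qed simp_all

lemma positive_op_trace_eq_0:
  assumes pos: "positive_op n A" and tr: "mtrace A = 0"
  shows "A = 0\<^sub>m n n"
proof -
  have A: "A \<in> carrier_mat n n" using pos by (simp add: positive_op_def)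
  have q: "Im (qform n A v) = 0 \<and> Re (qform n A v) \<ge> 0" if "v \<in> carrier_vec n" for v
    using pos that by (simp add: positive_op_def)
  have diag: "Im (A $$ (i,i)) = 0 \<and> Re (A $$ (i,i)) \<ge> 0" if "i < n" for i
    using q[of "unit_vec n i"] qform_support[of "\<lambda>x. x" "{i}" n "unit_vec n i" A] that by simp
  have "(\<Sum>i<n. Re (A $$ (i,i))) = 0"
    using arg_cong[OF tr, of Re] A by (simp add: mtrace_def Re_sum)
  then have diag0: "A $$ (i,i) = 0" if "i < n" for i
    using diag sum_nonneg_eq_0_iff[of "{..<n}" "\<lambda>i. Re (A $$ (i,i))"] that
    by (simp add: complex_eq_iff)
  have off: "A $$ (i,j) = 0" if ij: "i < n" "j < n" "i \<noteq> j" for i j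
  proof -
    \<comment> \<open>the form at \<open>e\<^sub>i + c e\<^sub>j\<close> is real and nonnegative for both \<open>c\<close> and \<open>-c\<close>, hence zero\<close>
    define s where "s c = A $$ (i,j) * c + cnj c * A $$ (j,i)" for c
    have "qform n A (vec n (\<lambda>x. if x = i then 1 else if x = j then c else 0)) = s c" for c
      using ij diag0 qform_support[of "\<lambda>x. x" "{i,j}" n _ A] by (simp add: s_def)
    then have nonneg: "Im (s c) = 0 \<and> Re (s c) \<ge> 0" for c
      using q by (metis vec_carrier)
    have "s c = 0" for c
    proof -
      have "Re (s (- c)) = - Re (s c)" by (simp add: s_def)
      then show ?thesis using nonneg[of c] nonneg[of "- c"] by (simp add: complex_eq_iff)
    qed
    from this[of 1] this[of \<i>] show ?thesis
      by (simp add: s_def algebra_simps)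
  qed
  show ?thesis by (rule eq_matI) (use A diag0 off in auto)
qed

section \<open>Gibbs states\<close>

lemma mat_exp_half_factor:
  fixes s :: real
  assumes H: "self_adjoint n H"
  shows "mat_exp (complex_of_real s \<cdot>\<^sub>m H)
      = mat_exp (complex_of_real (s / 2) \<cdot>\<^sub>m H) * adj (mat_exp (complex_of_real (s / 2) \<cdot>\<^sub>m H))"
    and "mat_exp (complex_of_real (- s / 2) \<cdot>\<^sub>m H) * adj (mat_exp (complex_of_real (s / 2) \<cdot>\<^sub>m H))
      = 1\<^sub>m n"
proof -
  have Hc: "H \<in> carrier_mat n n" and h: "adj H = H" using H by (auto simp: self_adjoint_def)
  have adj: "adj (mat_exp (complex_of_real (s / 2) \<cdot>\<^sub>m H)) = mat_exp (complex_of_real (s / 2) \<cdot>\<^sub>m H)"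
    using adj_mat_exp_smult[OF Hc h] by simp
  have "complex_of_real (s / 2) + complex_of_real (s / 2) = complex_of_real s"
    and "complex_of_real (- s / 2) + complex_of_real (s / 2) = 0"
    by (simp_all flip: of_real_add)
  then show "mat_exp (complex_of_real s \<cdot>\<^sub>m H)
      = mat_exp (complex_of_real (s / 2) \<cdot>\<^sub>m H) * adj (mat_exp (complex_of_real (s / 2) \<cdot>\<^sub>m H))"
    and "mat_exp (complex_of_real (- s / 2) \<cdot>\<^sub>m H) * adj (mat_exp (complex_of_real (s / 2) \<cdot>\<^sub>m H))
      = 1\<^sub>m n"
    unfolding adj mat_exp_smult_add[OF Hc] by (simp_all only: mat_exp_zero_smult[OF Hc])
qed

text \<open>\<open>tr e\<^sup>s\<^sup>H\<close> is the squared Frobenius norm of \<open>e\<^sup>s\<^sup>H\<^sup>/\<^sup>2\<close>, which is nonzero because it is invertible.\<close>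

lemma mtrace_mat_exp_pos:
  assumes n: "n > 0" and H: "self_adjoint n H"
  obtains r where "r > 0" "mtrace (mat_exp (complex_of_real s \<cdot>\<^sub>m H)) = complex_of_real r"
proof -
  define E where "E = mat_exp (complex_of_real (s / 2) \<cdot>\<^sub>m H)"
  define F where "F = mat_exp (complex_of_real (- s / 2) \<cdot>\<^sub>m H)"
  have Hc: "H \<in> carrier_mat n n" using H by (simp add: self_adjoint_def)
  have Ec: "E \<in> carrier_mat n n" and Fc: "F \<in> carrier_mat n n" using Hc by (simp_all add: E_def F_def)
  have "\<exists>i<n. \<exists>j<n. E $$ (i,j) \<noteq> 0"
  proof (rule ccontr)
    assume "\<not> ?thesis"
    then have "adj E = 0\<^sub>m n n" using Ec by (intro eq_matI) auto
    then have "1\<^sub>m n = (0\<^sub>m n n :: complex mat)"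
      using mat_exp_half_factor(2)[OF H, of s] Fc unfolding E_def F_def by (simp add: right_mult_zero_mat)
    then show False using n by (metis index_one_mat(1) index_zero_mat(1) zero_neq_one)
  qed
  then obtain i j where ij: "i < n" "j < n" "E $$ (i,j) \<noteq> 0" by blast
  then have "(\<Sum>j<n. (cmod (E $$ (i,j)))\<^sup>2) > 0"
    by (intro sum_pos2[of "{..<n}" j]) auto
  then have "(\<Sum>i<n. \<Sum>j<n. (cmod (E $$ (i,j)))\<^sup>2) > 0"
    using ij by (intro sum_pos2[of "{..<n}" i "\<lambda>i. \<Sum>j<n. (cmod (E $$ (i,j)))\<^sup>2"] sum_nonneg) auto
  then show ?thesis
    using that mtrace_mult_adj[OF Ec] mat_exp_half_factor(1)[OF H, of s] unfolding E_def by simp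
qed

lemma gibbs_carrier: "H \<in> carrier_mat n n \<Longrightarrow> gibbs \<beta> H \<in> carrier_mat n n"
  by (simp add: gibbs_def)

lemma mtrace_gibbs:
  assumes "n > 0" and H: "self_adjoint n H"
  shows "mtrace (gibbs \<beta> H) = 1"
proof -
  obtain r where "r > 0" "mtrace (mat_exp (complex_of_real (- \<beta>) \<cdot>\<^sub>m H)) = complex_of_real r"
    using mtrace_mat_exp_pos[OF assms] .
  then show ?thesis
    using H mtrace_smult[OF mat_exp_carrier, of _ n] by (simp add: gibbs_def self_adjoint_def)
qed

lemma gibbs_factorization:
  assumes "n > 0" and H: "self_adjoint n H"
  obtains E F where "E \<in> carrier_mat n n" "F \<in> carrier_mat n n" "F * adj E = 1\<^sub>m n"
    "gibbs \<beta> H = E * adj E"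
proof -
  define E0 where "E0 = mat_exp (complex_of_real (- \<beta> / 2) \<cdot>\<^sub>m H)"
  define F0 where "F0 = mat_exp (complex_of_real (\<beta> / 2) \<cdot>\<^sub>m H)"
  obtain r where r: "r > 0" "mtrace (mat_exp (complex_of_real (- \<beta>) \<cdot>\<^sub>m H)) = complex_of_real r"
    using mtrace_mat_exp_pos[OF assms] .
  have Hc: "H \<in> carrier_mat n n" using H by (simp add: self_adjoint_def)
  have E0: "E0 \<in> carrier_mat n n" and F0: "F0 \<in> carrier_mat n n"
    using Hc by (simp_all add: E0_def F0_def)
  have G: "mat_exp (complex_of_real (- \<beta>) \<cdot>\<^sub>m H) = E0 * adj E0"
    using mat_exp_half_factor(1)[OF H, of "- \<beta>"] by (simp add: E0_def)
  have FE: "F0 * adj E0 = 1\<^sub>m n"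
    using mat_exp_half_factor(2)[OF H, of "- \<beta>"] by (simp add: E0_def F0_def)
  define c where "c = complex_of_real (1 / sqrt r)"
  show ?thesis
  proof
    show "c \<cdot>\<^sub>m E0 \<in> carrier_mat n n" "(1 / c) \<cdot>\<^sub>m F0 \<in> carrier_mat n n" using E0 F0 by simp_all
    have c: "cnj c = c" "c \<noteq> 0" and c2: "c * c = 1 / complex_of_real r"
      using r(1) by (simp_all add: c_def flip: of_real_mult)
    have "c * (c * z) = z / complex_of_real r" for z
      using c2 by (simp add: mult.assoc[symmetric])
    with c show "(1 / c) \<cdot>\<^sub>m F0 * adj (c \<cdot>\<^sub>m E0) = 1\<^sub>m n"
      and "gibbs \<beta> H = c \<cdot>\<^sub>m E0 * adj (c \<cdot>\<^sub>m E0)"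
      using E0 F0 FE G r(2)
      by (auto simp: adj_smult gibbs_def mult_smult_assoc_mat[of _ n n _ n]
          mult_smult_distrib[of _ n n _ n] intro!: eq_matI)
  qed
qed

section \<open>Repeated interactions\<close>

lemma unitary_step_unitary:
  fixes \<tau> :: real
  assumes HS: "self_adjoint dS HS" and HE: "self_adjoint dE HE" and V: "self_adjoint (dS * dE) V"
  defines "U \<equiv> unitary_step dS dE HS HE V \<tau>"
  shows "U \<in> carrier_mat (dS * dE) (dS * dE)" "U * adj U = 1\<^sub>m (dS * dE)" "adj U * U = 1\<^sub>m (dS * dE)"
proof -
  define H where "H = kron HS (1\<^sub>m dE) + kron (1\<^sub>m dS) HE + V"
  have HS': "HS \<in> carrier_mat dS dS" "adj HS = HS" and HE': "HE \<in> carrier_mat dE dE" "adj HE = HE"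
    and V': "V \<in> carrier_mat (dS * dE) (dS * dE)" "adj V = V"
    using HS HE V by (simp_all add: self_adjoint_def)
  then have Hc: "H \<in> carrier_mat (dS * dE) (dS * dE)"
    by (simp add: H_def)
  have "adj H = H"
    using HS' HE' V' by (simp add: H_def adj_add[of _ "dS * dE" "dS * dE"] adj_kron)
  moreover have "U = mat_exp ((- (\<i> * complex_of_real \<tau>)) \<cdot>\<^sub>m H)"
    by (simp add: U_def unitary_step_def H_def)
  ultimately show "U \<in> carrier_mat (dS * dE) (dS * dE)" "U * adj U = 1\<^sub>m (dS * dE)"
    "adj U * U = 1\<^sub>m (dS * dE)"
    using Hc mat_exp_smult_unitary[OF Hc, of "- (\<i> * complex_of_real \<tau>)"] by simp_all
qed

lemma kron_gibbs_congruence: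
  assumes dE: "dE > 0" and HE: "self_adjoint dE HE" and \<rho>: "\<rho> \<in> carrier_mat dS dS"
  obtains K C where "K \<in> carrier_mat (dS * dE) (dS * dE)" "C \<in> carrier_mat (dS * dE) (dS * dE)"
    "C * adj K = 1\<^sub>m (dS * dE)" "kron \<rho> (gibbs \<beta> HE) = K * kron \<rho> (1\<^sub>m dE) * adj K"
proof -
  obtain E F where E: "E \<in> carrier_mat dE dE" and F: "F \<in> carrier_mat dE dE"
    and FE: "F * adj E = 1\<^sub>m dE" and g: "gibbs \<beta> HE = E * adj E"
    using gibbs_factorization[OF dE HE] .
  show ?thesis
  proof
    show "kron (1\<^sub>m dS) E \<in> carrier_mat (dS * dE) (dS * dE)"
      and "kron (1\<^sub>m dS) F \<in> carrier_mat (dS * dE) (dS * dE)"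
      using E F by simp_all
    have "kron (1\<^sub>m dS) F * adj (kron (1\<^sub>m dS) E) = kron (1\<^sub>m dS * 1\<^sub>m dS) (F * adj E)"
      unfolding adj_kron adj_one using E F by (intro kron_mult) auto
    then show "kron (1\<^sub>m dS) F * adj (kron (1\<^sub>m dS) E) = 1\<^sub>m (dS * dE)"
      by (simp add: FE kron_one)
    have "kron (1\<^sub>m dS) E * kron \<rho> (1\<^sub>m dE) * adj (kron (1\<^sub>m dS) E)
        = kron (1\<^sub>m dS * \<rho>) (E * 1\<^sub>m dE) * kron (1\<^sub>m dS) (adj E)"
      unfolding adj_kron adj_one using E \<rho> by (subst kron_mult) auto
    also have "\<dots> = kron (\<rho> * 1\<^sub>m dS) (E * adj E)"
      using E \<rho> by (simp add: kron_mult[of _ dS dS _ dE dE _ dS _ dE])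
    finally show "kron \<rho> (gibbs \<beta> HE) = kron (1\<^sub>m dS) E * kron \<rho> (1\<^sub>m dE) * adj (kron (1\<^sub>m dS) E)"
      using E \<rho> by (simp add: g)
  qed
qed

lemma positive_definite_rep_map:
  assumes dE: "dE > 0" and HS: "self_adjoint dS HS" and HE: "self_adjoint dE HE"
    and V: "self_adjoint (dS * dE) V" and \<rho>: "positive_definite dS \<rho>"
  shows "positive_definite dS (rep_map dS dE HS HE V \<tau> \<beta> \<rho>)"
proof -
  let ?U = "unitary_step dS dE HS HE V \<tau>"
  have "\<rho> \<in> carrier_mat dS dS" using \<rho> by (simp add: positive_definite_def)
  then obtain K C where K: "K \<in> carrier_mat (dS * dE) (dS * dE)" "C \<in> carrier_mat (dS * dE) (dS * dE)"
    "C * adj K = 1\<^sub>m (dS * dE)" and congr: "kron \<rho> (gibbs \<beta> HE) = K * kron \<rho> (1\<^sub>m dE) * adj K"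
    using kron_gibbs_congruence[OF dE HE] by metis
  have "positive_definite (dS * dE) (kron \<rho> (gibbs \<beta> HE))"
    unfolding congr using positive_definite_kron_one[OF \<rho>] K by (rule positive_definite_congruence)
  then have "positive_definite (dS * dE) (?U * kron \<rho> (gibbs \<beta> HE) * adj ?U)"
    using unitary_step_unitary[OF HS HE V] by (metis positive_definite_congruence)
  then show ?thesis
    unfolding rep_map_def Let_def by (rule positive_definite_ptrace2[OF _ dE])
qed

lemma positive_op_rep_map:
  assumes dE: "dE > 0" and HS: "self_adjoint dS HS" and HE: "self_adjoint dE HE"
    and V: "self_adjoint (dS * dE) V" and \<rho>: "positive_op dS \<rho>"
  shows "positive_op dS (rep_map dS dE HS HE V \<tau> \<beta> \<rho>)"
proof -
  let ?U = "unitary_step dS dE HS HE V \<tau>"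
  have "\<rho> \<in> carrier_mat dS dS" using \<rho> by (simp add: positive_op_def)
  then obtain K where K: "K \<in> carrier_mat (dS * dE) (dS * dE)"
    and congr: "kron \<rho> (gibbs \<beta> HE) = K * kron \<rho> (1\<^sub>m dE) * adj K"
    using kron_gibbs_congruence[OF dE HE] by metis
  have "positive_op (dS * dE) (kron \<rho> (gibbs \<beta> HE))"
    unfolding congr using positive_op_kron_one[OF \<rho>] K by (rule positive_op_congruence)
  then have "positive_op (dS * dE) (?U * kron \<rho> (gibbs \<beta> HE) * adj ?U)"
    using unitary_step_unitary[OF HS HE V] by (metis positive_op_congruence)
  then show ?thesis
    unfolding rep_map_def Let_def by (rule positive_op_ptrace2)
qed

lemma mtrace_rep_map:
  assumes dE: "dE > 0" and HS: "self_adjoint dS HS" and HE: "self_adjoint dE HE"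
    and V: "self_adjoint (dS * dE) V" and \<rho>: "\<rho> \<in> carrier_mat dS dS"
  shows "mtrace (rep_map dS dE HS HE V \<tau> \<beta> \<rho>) = mtrace \<rho>"
proof -
  let ?U = "unitary_step dS dE HS HE V \<tau>" and ?X = "kron \<rho> (gibbs \<beta> HE)"
  have U: "?U \<in> carrier_mat (dS * dE) (dS * dE)" "adj ?U * ?U = 1\<^sub>m (dS * dE)"
    using unitary_step_unitary[OF HS HE V] by simp_all
  have g: "gibbs \<beta> HE \<in> carrier_mat dE dE" using HE by (simp add: gibbs_carrier self_adjoint_def)
  then have X: "?X \<in> carrier_mat (dS * dE) (dS * dE)" using \<rho> by simp
  have "?U * ?X * adj ?U \<in> carrier_mat (dS * dE) (dS * dE)"
    using U X by (meson adj_carrier mult_carrier_mat)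
  then have "mtrace (rep_map dS dE HS HE V \<tau> \<beta> \<rho>) = mtrace (?U * ?X * adj ?U)"
    by (simp add: rep_map_def Let_def mtrace_ptrace2)
  also have "\<dots> = mtrace (adj ?U * (?U * ?X))"
    by (rule mtrace_mult_comm) (use U X in auto)
  also have "adj ?U * (?U * ?X) = adj ?U * ?U * ?X"
    using U X by (intro assoc_mult_mat[symmetric]) auto
  also have "mtrace (adj ?U * ?U * ?X) = mtrace \<rho> * mtrace (gibbs \<beta> HE)"
    using U X \<rho> g by (simp add: mtrace_kron)
  finally show ?thesis
    using dE HE by (simp add: mtrace_gibbs)
qed

lemma rep_map_nonzero:
  assumes dE: "dE > 0" and HS: "self_adjoint dS HS" and HE: "self_adjoint dE HE"
    and V: "self_adjoint (dS * dE) V" and \<rho>: "positive_op dS \<rho>" "\<rho> \<noteq> 0\<^sub>m dS dS"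
  shows "rep_map dS dE HS HE V \<tau> \<beta> \<rho> \<noteq> 0\<^sub>m dS dS"
proof
  assume zero: "rep_map dS dE HS HE V \<tau> \<beta> \<rho> = 0\<^sub>m dS dS"
  have "mtrace \<rho> = mtrace (rep_map dS dE HS HE V \<tau> \<beta> \<rho>)"
    using mtrace_rep_map[OF assms(1-4)] \<rho>(1) by (simp add: positive_op_def)
  also have "\<dots> = 0"
    unfolding zero by (simp add: mtrace_def)
  finally show False
    using positive_op_trace_eq_0[OF \<rho>(1)] \<rho>(2) by simp
qed

lemma positivity_improving_cycle_map:
  assumes j: "j \<in> {1..M}" and improving: "positivity_improving n (L j)"
    and definite: "\<And>i \<rho>. i \<in> {1..M} \<Longrightarrow> positive_definite n \<rho> \<Longrightarrow> positive_definite n (L i \<rho>)"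
    and nonzero: "\<And>i \<rho>. i \<in> {1..M} \<Longrightarrow> positive_op n \<rho> \<and> \<rho> \<noteq> 0\<^sub>m n n
      \<Longrightarrow> positive_op n (L i \<rho>) \<and> L i \<rho> \<noteq> 0\<^sub>m n n"
  shows "positivity_improving n (cycle_map M L)"
  unfolding positivity_improving_def
proof (intro allI impI)
  fix \<rho> assume \<rho>: "positive_op n \<rho> \<and> \<rho> \<noteq> 0\<^sub>m n n"
  have split: "[1..<M+1] = [1..<j] @ j # [Suc j..<M+1]"
    using j upt_add_eq_append[of 1 j "M + 1 - j"] upt_conv_Cons[of j "M + 1"] by auto
  have "positive_op n (fold L [1..<j] \<rho>) \<and> fold L [1..<j] \<rho> \<noteq> 0\<^sub>m n n"
    by (rule fold_invariant[where Q = "\<lambda>i. i \<in> {1..M}"]) (use j \<rho> nonzero in auto)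
  then have "positive_definite n (L j (fold L [1..<j] \<rho>))"
    using improving unfolding positivity_improving_def by blast
  then have "positive_definite n (fold L [Suc j..<M+1] (L j (fold L [1..<j] \<rho>)))"
    by (rule fold_invariant[where Q = "\<lambda>i. i \<in> {1..M}", rotated]) (use j in \<open>auto intro: definite\<close>)
  then show "positive_definite n (cycle_map M L \<rho>)"
    unfolding cycle_map_def split by simp
qed

theorem mainTheorem8:
  fixes M dS :: nat and dE :: "nat \<Rightarrow> nat"
    and HS :: "complex mat" and HE V :: "nat \<Rightarrow> complex mat"
    and \<tau> \<zeta> :: "nat \<Rightarrow> real" and \<beta>_ref :: real
  assumes "dS > 0"
    and "\<forall>j\<in>{1..M}. dE j > 0"
    and "self_adjoint dS HS"
    and "\<forall>j\<in>{1..M}. self_adjoint (dE j) (HE j)"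
    and "\<forall>j\<in>{1..M}. self_adjoint (dS * dE j) (V j)"
    and "\<forall>j\<in>{1..M}. \<tau> j > 0"
    and "\<beta>_ref > 0"
  shows "(\<forall>j\<in>{1..M}. \<forall>\<rho>. positive_definite dS \<rho> \<longrightarrow>
            positive_definite dS (rep_map dS (dE j) HS (HE j) (V j) (\<tau> j) (\<beta>_ref - \<zeta> j) \<rho>))
       \<and> ((\<exists>j\<in>{1..M}. positivity_improving dS
               (rep_map dS (dE j) HS (HE j) (V j) (\<tau> j) (\<beta>_ref - \<zeta> j)))
          \<longrightarrow> positivity_improving dS
               (cycle_map M (\<lambda>j. rep_map dS (dE j) HS (HE j) (V j) (\<tau> j) (\<beta>_ref - \<zeta> j))))"
proof -
  define L where "L j = rep_map dS (dE j) HS (HE j) (V j) (\<tau> j) (\<beta>_ref - \<zeta> j)" for j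
  have step: "dE j > 0" "self_adjoint (dE j) (HE j)" "self_adjoint (dS * dE j) (V j)"
    if "j \<in> {1..M}" for j
    using assms(2,4,5) that by auto
  have definite: "positive_definite dS (L j \<rho>)" if "j \<in> {1..M}" "positive_definite dS \<rho>" for j \<rho>
    unfolding L_def using positive_definite_rep_map[OF step(1)[OF that(1)] assms(3) step(2,3)[OF that(1)]] that(2) .
  have nonzero: "positive_op dS (L j \<rho>) \<and> L j \<rho> \<noteq> 0\<^sub>m dS dS"
    if j: "j \<in> {1..M}" and \<rho>: "positive_op dS \<rho> \<and> \<rho> \<noteq> 0\<^sub>m dS dS" for j \<rho>
    unfolding L_def using \<rho> positive_op_rep_map[OF step(1)[OF j] assms(3) step(2,3)[OF j]]
      rep_map_nonzero[OF step(1)[OF j] assms(3) step(2,3)[OF j]] by blast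
  show ?thesis
    using definite positivity_improving_cycle_map[of _ M dS L, OF _ _ definite nonzero]
    unfolding L_def by blast
qed

end
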